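(* Two elements $\tau=(w,z)$ and $\tau'=(w',z')$ of $\mathcal K^J$ lie in the same $W$-orbit if and only if $z$ and $z'$ lie in the same $W_J$-conjugacy class in $\mathscr I_J$.
   Context: Let $(W,S)$ be a finite Coxeter system with length function $\ell$ and reflections $T=\{wsw^{-1}:w\in W,s\in S\}$. Let $\mathrm{Aut}(W,S)$ be the automorphisms $\varphi$ of $W$ with $\varphi(S)=S$, and $W^+=W\rtimes\mathrm{Aut}(W,S)$ the group of pairs $(w,\varphi)$ with $(v,\alpha)(w,\beta)=(v\,\alpha(w),\alpha\beta)$; set $\ell(w,\varphi)=\ell(w)$ and identify $w$ with $(w,1)$. $z\in W^+$ is a perfect involution if $z^2=1$ and $(zt)^4=1$ for all $t\in T$. For $J\subseteq S$: $W_J=\langle J\rangle$; $\mathscr I_J$ is the set of perfect involutions of $(W_J)^+=W_J\rtimes\mathrm{Aut}(W_J,J)$, on which $W_J$ acts by conjugation $v:(y,\theta)\mapsto(v\,y\,\theta(v)^{-1},\theta)$. $W^J=\{w\in W:\ell(ws)>\ell(w)\ \forall s\in J\}$, $\mathcal K^J=W^J\times\mathscr I_J$. For $s\in S$ and $\tau=(w,z)\in\mathcal K^J$: $s\tau=(sw,z)$ if $sw\in W^J$; otherwise $t:=w^{-1}sw\in J$ and $s\tau=(w,tzt)$. This extends to an action of $W$ on $\mathcal K^J$. *)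

theory Defs
  imports "HOL-Algebra.Multiplicative_Group" "HOL-Algebra.Generated_Groups"
begin

definition word_eval :: "('w, 'b) monoid_scheme \<Rightarrow> 'w list \<Rightarrow> 'w" where
  "word_eval G u = foldr (\<lambda>x y. x \<otimes>\<^bsub>G\<^esub> y) u \<one>\<^bsub>G\<^esub>"

definition cox_m :: "('w, 'b) monoid_scheme \<Rightarrow> 'w \<Rightarrow> 'w \<Rightarrow> nat" where
  "cox_m G s t = group.ord G (s \<otimes>\<^bsub>G\<^esub> t)"

inductive cox_eq :: "('w, 'b) monoid_scheme \<Rightarrow> 'w set \<Rightarrow> 'w list \<Rightarrow> 'w list \<Rightarrow> bool"
  for G S where
  refl: "cox_eq G S u u"
| sym: "cox_eq G S u v \<Longrightarrow> cox_eq G S v u"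
| trans: "cox_eq G S u v \<Longrightarrow> cox_eq G S v x \<Longrightarrow> cox_eq G S u x"
| ctx: "cox_eq G S u v \<Longrightarrow> set a \<subseteq> S \<Longrightarrow> set b \<subseteq> S \<Longrightarrow> cox_eq G S (a @ u @ b) (a @ v @ b)"
| sq: "s \<in> S \<Longrightarrow> cox_eq G S [s, s] []"
| braid: "s \<in> S \<Longrightarrow> t \<in> S \<Longrightarrow> cox_eq G S (concat (replicate (cox_m G s t) [s, t])) []"

definition coxeter_system :: "('w, 'b) monoid_scheme \<Rightarrow> 'w set \<Rightarrow> bool" where
  "coxeter_system G S \<longleftrightarrow>
     group G \<and> S \<subseteq> carrier G \<and> generate G S = carrier G \<and>
     (\<forall>s\<in>S. s \<noteq> \<one>\<^bsub>G\<^esub> \<and> s \<otimes>\<^bsub>G\<^esub> s = \<one>\<^bsub>G\<^esub>) \<and>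
     (\<forall>u. set u \<subseteq> S \<longrightarrow> word_eval G u = \<one>\<^bsub>G\<^esub> \<longrightarrow> cox_eq G S u [])"

definition cox_len :: "('w, 'b) monoid_scheme \<Rightarrow> 'w set \<Rightarrow> 'w \<Rightarrow> nat" where
  "cox_len G S w = (LEAST n. \<exists>u. length u = n \<and> set u \<subseteq> S \<and> word_eval G u = w)"

definition reflections :: "('w, 'b) monoid_scheme \<Rightarrow> 'w set \<Rightarrow> 'w set" where
  "reflections G S = {w \<otimes>\<^bsub>G\<^esub> s \<otimes>\<^bsub>G\<^esub> inv\<^bsub>G\<^esub> w | w s. w \<in> carrier G \<and> s \<in> S}"

definition parabolic :: "('w, 'b) monoid_scheme \<Rightarrow> 'w set \<Rightarrow> ('w, 'b) monoid_scheme" where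
  "parabolic G J = G\<lparr>carrier := generate G J\<rparr>"

definition min_reps :: "('w, 'b) monoid_scheme \<Rightarrow> 'w set \<Rightarrow> 'w set \<Rightarrow> 'w set" where
  "min_reps G S J = {w \<in> carrier G. \<forall>s\<in>J. cox_len G S (w \<otimes>\<^bsub>G\<^esub> s) > cox_len G S w}"

text \<open>Aut(W,S): automorphisms preserving S; represented as functions that are
  extensional on the carrier (so that equality of automorphisms is equality of
  functions).\<close>
definition autS :: "('w, 'b) monoid_scheme \<Rightarrow> 'w set \<Rightarrow> ('w \<Rightarrow> 'w) set" where
  "autS G S = {\<phi>. \<phi> \<in> iso G G \<and> \<phi> ` S = S \<and> \<phi> \<in> extensional (carrier G)}"

definition plus_carrier :: "('w, 'b) monoid_scheme \<Rightarrow> 'w set \<Rightarrow> ('w \<times> ('w \<Rightarrow> 'w)) set" where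
  "plus_carrier G S = carrier G \<times> autS G S"

definition plus_mult :: "('w, 'b) monoid_scheme \<Rightarrow> 'w \<times> ('w \<Rightarrow> 'w) \<Rightarrow> 'w \<times> ('w \<Rightarrow> 'w) \<Rightarrow> 'w \<times> ('w \<Rightarrow> 'w)" where
  "plus_mult G x y = (fst x \<otimes>\<^bsub>G\<^esub> snd x (fst y), restrict (snd x \<circ> snd y) (carrier G))"

definition plus_emb :: "('w, 'b) monoid_scheme \<Rightarrow> 'w \<Rightarrow> 'w \<times> ('w \<Rightarrow> 'w)" where
  "plus_emb G w = (w, restrict id (carrier G))"

definition plus_one :: "('w, 'b) monoid_scheme \<Rightarrow> 'w \<times> ('w \<Rightarrow> 'w)" where
  "plus_one G = plus_emb G \<one>\<^bsub>G\<^esub>"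

definition perfect_involutions :: "('w, 'b) monoid_scheme \<Rightarrow> 'w set \<Rightarrow> ('w \<times> ('w \<Rightarrow> 'w)) set" where
  "perfect_involutions G S =
     {z \<in> plus_carrier G S. plus_mult G z z = plus_one G \<and>
        (\<forall>t\<in>reflections G S.
           let x = plus_mult G z (plus_emb G t) in
           plus_mult G (plus_mult G x x) (plus_mult G x x) = plus_one G)}"

definition conj_act :: "('w, 'b) monoid_scheme \<Rightarrow> 'w \<Rightarrow> 'w \<times> ('w \<Rightarrow> 'w) \<Rightarrow> 'w \<times> ('w \<Rightarrow> 'w)" where
  "conj_act G v z = (v \<otimes>\<^bsub>G\<^esub> fst z \<otimes>\<^bsub>G\<^esub> inv\<^bsub>G\<^esub> (snd z v), snd z)"

definition KJ :: "('w, 'b) monoid_scheme \<Rightarrow> 'w set \<Rightarrow> 'w set \<Rightarrow> ('w \<times> ('w \<times> ('w \<Rightarrow> 'w))) set" where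
  "KJ G S J = min_reps G S J \<times> perfect_involutions (parabolic G J) J"

definition KJ_act :: "('w, 'b) monoid_scheme \<Rightarrow> 'w set \<Rightarrow> 'w set \<Rightarrow> 'w
    \<Rightarrow> 'w \<times> ('w \<times> ('w \<Rightarrow> 'w)) \<Rightarrow> 'w \<times> ('w \<times> ('w \<Rightarrow> 'w))" where
  "KJ_act G S J s \<tau> =
     (let w = fst \<tau>; z = snd \<tau> in
      if s \<otimes>\<^bsub>G\<^esub> w \<in> min_reps G S J then (s \<otimes>\<^bsub>G\<^esub> w, z)
      else (let t = inv\<^bsub>G\<^esub> w \<otimes>\<^bsub>G\<^esub> s \<otimes>\<^bsub>G\<^esub> w; WJ = parabolic G J in
            (w, plus_mult WJ (plus_mult WJ (plus_emb WJ t) z) (plus_emb WJ t))))"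

definition KJ_word_act :: "('w, 'b) monoid_scheme \<Rightarrow> 'w set \<Rightarrow> 'w set \<Rightarrow> 'w list
    \<Rightarrow> 'w \<times> ('w \<times> ('w \<Rightarrow> 'w)) \<Rightarrow> 'w \<times> ('w \<times> ('w \<Rightarrow> 'w))" where
  "KJ_word_act G S J u \<tau> = foldr (KJ_act G S J) u \<tau>"

text \<open>Same W-orbit: since W is generated by S, the W-orbit of \<tau> consists of
  the images of \<tau> under words in S.\<close>
definition same_W_orbit :: "('w, 'b) monoid_scheme \<Rightarrow> 'w set \<Rightarrow> 'w set
    \<Rightarrow> 'w \<times> ('w \<times> ('w \<Rightarrow> 'w)) \<Rightarrow> 'w \<times> ('w \<times> ('w \<Rightarrow> 'w)) \<Rightarrow> bool" where
  "same_W_orbit G S J \<tau> \<tau>' \<longleftrightarrow> (\<exists>u. set u \<subseteq> S \<and> KJ_word_act G S J u \<tau> = \<tau>')"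

end

theory Submission
  imports Defs
begin

text \<open>Tits' trick: letting \<open>s \<in> S\<close> act on \<open>W \<times> {\<plusminus>1}\<close> by
  \<open>(y, \<epsilon>) \<mapsto> (sys, \<epsilon>(-1)\<^bsup>[y = s]\<^esup>)\<close> respects the Coxeter relations, so for every word the parity
  of the number of occurrences of a reflection among its right reflections depends only on
  its value. This gives the deletion property and Deodhar's lemma: if \<open>x \<in> W\<^sup>J\<close> and
  \<open>sx \<notin> W\<^sup>J\<close>, then \<open>x\<inverse>sx = r \<in> J\<close>. Hence a generator either moves \<open>x\<close> inside \<open>W\<^sup>J\<close> or
  conjugates \<open>z\<close> by \<open>r \<in> W\<^sub>J\<close>, so orbits preserve the \<open>W\<^sub>J\<close>-class of \<open>z\<close>. Conversely, a
  reduced word of \<open>x \<in> W\<^sup>J\<close> read backwards moves \<open>(x, z)\<close> to \<open>(1, z)\<close>, a word in \<open>J\<close> then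
  conjugates \<open>z\<close> at will, and a reduced word of \<open>x'\<close> moves \<open>(1, z')\<close> to \<open>(x', z')\<close>.\<close>

lemma count_list_map_inj_on:
  "inj_on f (insert x (set xs)) \<Longrightarrow> count_list (map f xs) (f x) = count_list xs x"
  by (induction xs) (auto simp: inj_on_def)

context group
begin

lemma word_eval_Nil [simp]: "word_eval G [] = \<one>"
  by (simp add: word_eval_def)

lemma word_eval_Cons [simp]: "word_eval G (x # u) = x \<otimes> word_eval G u"
  by (simp add: word_eval_def)

lemma word_eval_closed [simp]: "set u \<subseteq> carrier G \<Longrightarrow> word_eval G u \<in> carrier G"
  by (induction u) auto

lemma word_eval_append:
  "set u \<subseteq> carrier G \<Longrightarrow> set v \<subseteq> carrier G \<Longrightarrow>
   word_eval G (u @ v) = word_eval G u \<otimes> word_eval G v"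
  by (induction u) (auto simp: m_assoc)

lemma inv_eq_self_if_square_one: "s \<in> carrier G \<Longrightarrow> s \<otimes> s = \<one> \<Longrightarrow> inv s = s"
  using inv_equality by blast

lemma conj_eq_iff:
  assumes "g \<in> carrier G" "y \<in> carrier G" "s \<in> carrier G"
  shows "g \<otimes> y \<otimes> inv g = s \<longleftrightarrow> inv g \<otimes> s \<otimes> g = y"
proof
  assume "g \<otimes> y \<otimes> inv g = s"
  then have "inv g \<otimes> s \<otimes> g = inv g \<otimes> (g \<otimes> y \<otimes> inv g) \<otimes> g" by simp
  also have "\<dots> = y" using assms by (simp add: m_assoc[symmetric]) (simp add: m_assoc)
  finally show "inv g \<otimes> s \<otimes> g = y" .
next
  assume "inv g \<otimes> s \<otimes> g = y"
  then have "g \<otimes> y \<otimes> inv g = g \<otimes> (inv g \<otimes> s \<otimes> g) \<otimes> inv g" by simp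
  also have "\<dots> = s" using assms by (simp add: m_assoc[symmetric]) (simp add: m_assoc)
  finally show "g \<otimes> y \<otimes> inv g = s" .
qed

lemma mult_pow_swap:
  "a \<in> carrier G \<Longrightarrow> b \<in> carrier G \<Longrightarrow> a \<otimes> (b \<otimes> a) [^] (n::nat) = (a \<otimes> b) [^] n \<otimes> a"
proof (induction n)
  case 0
  then show ?case by simp
next
  case (Suc n)
  have "a \<otimes> (b \<otimes> a) [^] Suc n = (a \<otimes> (b \<otimes> a) [^] n) \<otimes> (b \<otimes> a)"
    using Suc.prems by (simp add: m_assoc)
  also have "\<dots> = (a \<otimes> b) [^] n \<otimes> (a \<otimes> b) \<otimes> a"
    using Suc by (simp add: m_assoc)
  finally show ?case by simp
qed

lemma generate_involutions_word:
  assumes "A \<subseteq> carrier G" "\<And>a. a \<in> A \<Longrightarrow> a \<otimes> a = \<one>" "x \<in> generate G A"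
  shows "\<exists>u. set u \<subseteq> A \<and> word_eval G u = x"
  using assms(3)
proof (induction rule: generate.induct)
  case one
  then show ?case by (intro exI[of _ "[]"]) auto
next
  case (incl h)
  then show ?case using assms(1) by (intro exI[of _ "[h]"]) auto
next
  case (inv h)
  then show ?case using assms(1,2) inv_eq_self_if_square_one[of h] by (intro exI[of _ "[h]"]) auto
next
  case (eng h1 h2)
  then obtain u1 u2 where "set u1 \<subseteq> A" "word_eval G u1 = h1" "set u2 \<subseteq> A" "word_eval G u2 = h2"
    by blast
  then show ?case using assms(1) word_eval_append[of u1 u2] by (intro exI[of _ "u1 @ u2"]) auto
qed

lemma word_eval_in_generate: "set u \<subseteq> A \<Longrightarrow> word_eval G u \<in> generate G A"
  by (induction u) (auto intro: generate.one generate.eng generate.incl)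

lemma autS_hom: "\<theta> \<in> autS G S \<Longrightarrow> \<theta> \<in> hom G G"
  unfolding autS_def iso_def by auto

lemma autS_closed: "\<theta> \<in> autS G S \<Longrightarrow> x \<in> carrier G \<Longrightarrow> \<theta> x \<in> carrier G"
  by (rule hom_in_carrier[OF autS_hom])

lemma autS_mult:
  "\<theta> \<in> autS G S \<Longrightarrow> x \<in> carrier G \<Longrightarrow> y \<in> carrier G \<Longrightarrow> \<theta> (x \<otimes> y) = \<theta> x \<otimes> \<theta> y"
  by (rule hom_mult[OF autS_hom])

lemma autS_one: "\<theta> \<in> autS G S \<Longrightarrow> \<theta> \<one> = \<one>"
  by (rule hom_one[OF autS_hom is_group is_group])

lemma autS_gens: "\<theta> \<in> autS G S \<Longrightarrow> s \<in> S \<Longrightarrow> \<theta> s \<in> S"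
  unfolding autS_def by auto

lemma conj_act_closed:
  "v \<in> carrier G \<Longrightarrow> z \<in> plus_carrier G S \<Longrightarrow> conj_act G v z \<in> plus_carrier G S"
  by (auto simp: conj_act_def plus_carrier_def autS_closed)

lemma conj_act_one: "z \<in> plus_carrier G S \<Longrightarrow> conj_act G \<one> z = z"
  by (auto simp: conj_act_def plus_carrier_def autS_one)

lemma conj_act_mult:
  assumes v1: "v1 \<in> carrier G" and v2: "v2 \<in> carrier G" and z: "z \<in> plus_carrier G S"
  shows "conj_act G v1 (conj_act G v2 z) = conj_act G (v1 \<otimes> v2) z"
proof -
  obtain a \<theta> where a: "z = (a, \<theta>)" "a \<in> carrier G" "\<theta> \<in> autS G S"
    using z unfolding plus_carrier_def by auto
  have "v1 \<otimes> (v2 \<otimes> a \<otimes> inv (\<theta> v2)) \<otimes> inv (\<theta> v1) = v1 \<otimes> v2 \<otimes> a \<otimes> inv (\<theta> v1 \<otimes> \<theta> v2)"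
    using a v1 v2 autS_closed by (simp add: m_assoc inv_mult_group)
  then show ?thesis using a v1 v2 autS_mult by (simp add: conj_act_def)
qed

lemma plus_mult_conj_gen:
  assumes S: "S \<subseteq> carrier G" "\<And>s. s \<in> S \<Longrightarrow> s \<otimes> s = \<one>"
    and t: "t \<in> S" and z: "z \<in> plus_carrier G S"
  shows "plus_mult G (plus_mult G (plus_emb G t) z) (plus_emb G t) = conj_act G t z"
proof -
  obtain a \<theta> where a: "z = (a, \<theta>)" "a \<in> carrier G" "\<theta> \<in> autS G S"
    using z unfolding plus_carrier_def by auto
  have ext: "\<theta> \<in> extensional (carrier G)" using a(3) unfolding autS_def by auto
  have r: "restrict (restrict id (carrier G) \<circ> \<theta>) (carrier G) = \<theta>"
    "restrict (\<theta> \<circ> restrict id (carrier G)) (carrier G) = \<theta>"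
    using ext autS_closed[OF a(3)] by (auto simp: fun_eq_iff extensional_def)
  have "\<theta> t \<in> S" using autS_gens[OF a(3) t] .
  then have "\<theta> t \<in> carrier G" "inv (\<theta> t) = \<theta> t"
    using S inv_eq_self_if_square_one by auto
  moreover have "t \<in> carrier G" using S t by auto
  ultimately show ?thesis
    using a r by (simp add: plus_mult_def plus_emb_def conj_act_def)
qed

lemma carrier_parabolic [simp]: "carrier (parabolic G J) = generate G J"
  by (simp add: parabolic_def)

lemma mult_parabolic [simp]: "x \<otimes>\<^bsub>parabolic G J\<^esub> y = x \<otimes> y"
  by (simp add: parabolic_def)

lemma one_parabolic [simp]: "\<one>\<^bsub>parabolic G J\<^esub> = \<one>"
  by (simp add: parabolic_def)

lemma group_parabolic: "J \<subseteq> carrier G \<Longrightarrow> group (parabolic G J)"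
  unfolding parabolic_def using subgroup_imp_group[OF generate_is_subgroup] .

end

locale coxeter_presentation = group G for G (structure) +
  fixes S :: "'a set"
  assumes gens_carrier: "S \<subseteq> carrier G"
    and generate_gens: "generate G S = carrier G"
    and gen_square: "s \<in> S \<Longrightarrow> s \<otimes> s = \<one>"
    and relations_complete: "set u \<subseteq> S \<Longrightarrow> word_eval G u = \<one> \<Longrightarrow> cox_eq G S u []"

lemma coxeter_presentationI: "coxeter_system G S \<Longrightarrow> coxeter_presentation G S"
  unfolding coxeter_system_def coxeter_presentation_def coxeter_presentation_axioms_def by auto

context coxeter_presentation
begin

lemma gen_closed: "s \<in> S \<Longrightarrow> s \<in> carrier G"
  using gens_carrier by auto

lemma gens_word_closed: "set u \<subseteq> S \<Longrightarrow> set u \<subseteq> carrier G"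
  using gens_carrier by auto

lemma inv_gen: "s \<in> S \<Longrightarrow> inv s = s"
  using inv_eq_self_if_square_one gen_closed gen_square by auto

abbreviation len :: "'a \<Rightarrow> nat" where
  "len x \<equiv> cox_len G S x"

lemma len_le_length: "set u \<subseteq> S \<Longrightarrow> len (word_eval G u) \<le> length u"
  unfolding cox_len_def by (rule Least_le) auto

lemma exists_reduced_word:
  assumes "x \<in> carrier G"
  obtains u where "set u \<subseteq> S" "word_eval G u = x" "length u = len x"
proof -
  have "\<exists>n u. length u = n \<and> set u \<subseteq> S \<and> word_eval G u = x"
    using generate_involutions_word[OF gens_carrier gen_square] generate_gens assms by auto
  from LeastI_ex[OF this] show ?thesis using that unfolding cox_len_def by blast
qed

lemma len_one: "len \<one> = 0"
  using len_le_length[of "[]"] by simp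

lemma len_gen_mult_le: "s \<in> S \<Longrightarrow> x \<in> carrier G \<Longrightarrow> len (s \<otimes> x) \<le> Suc (len x)"
  by (metis exists_reduced_word insert_subset length_Cons len_le_length list.simps(15) word_eval_Cons)

lemma word_eval_rev_mult: "set u \<subseteq> S \<Longrightarrow> word_eval G (rev u) \<otimes> word_eval G u = \<one>"
proof (induction u)
  case Nil
  then show ?case by simp
next
  case (Cons s u)
  have c: "set u \<subseteq> carrier G" "s \<in> carrier G" using Cons.prems gens_carrier by auto
  have "word_eval G (rev (s # u)) \<otimes> word_eval G (s # u)
      = word_eval G (rev u) \<otimes> (s \<otimes> s) \<otimes> word_eval G u"
    using c by (simp add: word_eval_append m_assoc)
  also have "\<dots> = \<one>" using Cons c gen_square[of s] by simp
  finally show ?case .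
qed

text \<open>If \<open>u = s\<^sub>1 \<dots> s\<^sub>k\<close>, the \<open>i\<close>-th entry is \<open>t\<^sub>i = (s\<^sub>i\<^sub>+\<^sub>1 \<cdots> s\<^sub>k)\<inverse> s\<^sub>i (s\<^sub>i\<^sub>+\<^sub>1 \<cdots> s\<^sub>k)\<close>,
  so that \<open>u t\<^sub>i\<close> evaluates to the word with \<open>s\<^sub>i\<close> deleted.\<close>
fun right_reflections :: "'a list \<Rightarrow> 'a list" where
  "right_reflections [] = []"
| "right_reflections (s # u) = (inv (word_eval G u) \<otimes> s \<otimes> word_eval G u) # right_reflections u"

lemma right_reflections_closed: "set u \<subseteq> S \<Longrightarrow> set (right_reflections u) \<subseteq> carrier G"
  by (induction u) (auto simp: gen_closed gens_word_closed)

text \<open>The sign is encoded as a boolean. Off the carrier the action is the identity, so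
  that it is an involution on the whole type.\<close>
definition refl_act :: "'a \<Rightarrow> 'a \<times> bool \<Rightarrow> 'a \<times> bool" where
  "refl_act s p = (if fst p \<in> carrier G then (s \<otimes> fst p \<otimes> s, snd p \<noteq> (fst p = s)) else p)"

definition refl_word_act :: "'a list \<Rightarrow> 'a \<times> bool \<Rightarrow> 'a \<times> bool" where
  "refl_word_act u = foldr refl_act u"

lemma refl_word_act_Nil [simp]: "refl_word_act [] = id"
  by (simp add: refl_word_act_def)

lemma refl_word_act_Cons [simp]: "refl_word_act (s # u) = refl_act s \<circ> refl_word_act u"
  by (simp add: refl_word_act_def)

lemma refl_word_act_append: "refl_word_act (u @ v) = refl_word_act u \<circ> refl_word_act v"
  by (rule ext) (simp add: refl_word_act_def)

lemma refl_word_act_outside: "y \<notin> carrier G \<Longrightarrow> refl_word_act u (y, b) = (y, b)"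
  by (induction u) (auto simp: refl_act_def)

lemma refl_word_act_eq:
  assumes "set u \<subseteq> S" "y \<in> carrier G"
  shows "refl_word_act u (y, b) =
    (word_eval G u \<otimes> y \<otimes> inv (word_eval G u), b \<noteq> odd (count_list (right_reflections u) y))"
  using assms
proof (induction u arbitrary: b)
  case Nil
  then show ?case by simp
next
  case (Cons s u)
  let ?g = "word_eval G u"
  let ?c = "count_list (right_reflections u) y"
  have c: "?g \<in> carrier G" "s \<in> carrier G" "set u \<subseteq> S"
    using Cons.prems gens_word_closed gen_closed by auto
  have yc: "?g \<otimes> y \<otimes> inv ?g \<in> carrier G"
    using c Cons.prems by simp
  have "refl_word_act (s # u) (y, b) = refl_act s (?g \<otimes> y \<otimes> inv ?g, b \<noteq> odd ?c)"
    using Cons.IH[OF c(3) Cons.prems(2)] by simp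
  also have "\<dots> = (s \<otimes> (?g \<otimes> y \<otimes> inv ?g) \<otimes> s, (b \<noteq> odd ?c) \<noteq> (inv ?g \<otimes> s \<otimes> ?g = y))"
    using yc conj_eq_iff[OF c(1) Cons.prems(2) c(2)] by (simp add: refl_act_def)
  also have "s \<otimes> (?g \<otimes> y \<otimes> inv ?g) \<otimes> s = (s \<otimes> ?g) \<otimes> y \<otimes> inv (s \<otimes> ?g)"
    using c Cons.prems inv_gen[of s] by (simp add: m_assoc inv_mult_group)
  finally show ?case by simp
qed

lemma refl_act_involution: "s \<in> S \<Longrightarrow> refl_act s (refl_act s p) = p"
proof -
  assume s: "s \<in> S"
  then have sc: "s \<in> carrier G" by (rule gen_closed)
  obtain y b where p: "p = (y, b)" by force
  show ?thesis
  proof (cases "y \<in> carrier G")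
    case True
    have "s \<otimes> (s \<otimes> y \<otimes> s) \<otimes> s = y"
      using True sc gen_square[OF s] by (simp add: m_assoc[symmetric]) (simp add: m_assoc)
    moreover have "s \<otimes> y \<otimes> s = s \<longleftrightarrow> y = s"
      using conj_eq_iff[OF sc True sc] sc gen_square[OF s] inv_gen[OF s] by (auto simp: m_assoc)
    ultimately show ?thesis
      using p True sc by (auto simp: refl_act_def)
  qed (auto simp: refl_act_def p)
qed

lemma refl_word_act_rev: "set u \<subseteq> S \<Longrightarrow> refl_word_act u (refl_word_act (rev u) p) = p"
  by (induction u arbitrary: p) (auto simp: refl_word_act_append refl_act_involution)

lemma word_eval_braid_word:
  "s \<in> carrier G \<Longrightarrow> t \<in> carrier G \<Longrightarrow>
   word_eval G (concat (replicate n [s, t])) = (s \<otimes> t) [^] n"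
proof (induction n)
  case (Suc n)
  then have "word_eval G (concat (replicate (Suc n) [s, t])) = (s \<otimes> t) \<otimes> (s \<otimes> t) [^] n"
    by (simp add: m_assoc)
  then show ?case using Suc.prems nat_pow_Suc2[of "s \<otimes> t" n] by simp
qed simp

lemma right_reflections_braid_word:
  assumes s: "s \<in> S" and t: "t \<in> S"
  shows "right_reflections (concat (replicate n [s, t]))
       = rev (map (\<lambda>i. t \<otimes> (s \<otimes> t) [^] i) [0..<2 * n])"
proof (induction n)
  case 0
  then show ?case by simp
next
  case (Suc n)
  have cs: "s \<in> carrier G" "t \<in> carrier G" using s t gen_closed by auto
  let ?X = "concat (replicate n [s, t])"
  let ?g = "(s \<otimes> t) [^] n"
  let ?h = "\<lambda>i. t \<otimes> (s \<otimes> t) [^] i"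
  have gX: "word_eval G ?X = ?g" using word_eval_braid_word[OF cs] .
  have gc: "?g \<in> carrier G" using cs by simp
  have "inv ?g = (t \<otimes> s) [^] n"
    using cs inv_gen[OF s] inv_gen[OF t] nat_pow_inv[of "s \<otimes> t" n] by (simp add: inv_mult_group)
  then have swap: "inv ?g \<otimes> t = t \<otimes> ?g"
    using mult_pow_swap[OF cs(2) cs(1), of n] by simp
  have a1: "inv ?g \<otimes> t \<otimes> ?g = ?h (2 * n)"
  proof -
    have "inv ?g \<otimes> t \<otimes> ?g = t \<otimes> (?g \<otimes> ?g)" using swap cs gc by (simp add: m_assoc)
    also have "\<dots> = ?h (2 * n)" using cs by (simp add: nat_pow_mult mult_2)
    finally show ?thesis .
  qed
  have a2: "inv (t \<otimes> ?g) \<otimes> s \<otimes> (t \<otimes> ?g) = ?h (2 * n + 1)"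
  proof -
    have "inv (t \<otimes> ?g) = inv ?g \<otimes> t" using cs gc inv_gen[OF t] by (simp add: inv_mult_group)
    then have "inv (t \<otimes> ?g) \<otimes> s \<otimes> (t \<otimes> ?g) = t \<otimes> (?g \<otimes> (s \<otimes> t)) \<otimes> ?g"
      using swap cs gc by (simp add: m_assoc)
    also have "\<dots> = t \<otimes> ((s \<otimes> t) [^] Suc n \<otimes> ?g)"
      using cs gc by (simp only: nat_pow_Suc) (simp add: m_assoc)
    also have "\<dots> = ?h (2 * n + 1)"
      using cs nat_pow_mult[of "s \<otimes> t" "Suc n" n] by (simp add: mult_2 del: nat_pow_Suc)
    finally show ?thesis .
  qed
  have "right_reflections (concat (replicate (Suc n) [s, t]))
      = ?h (2 * n + 1) # ?h (2 * n) # right_reflections ?X"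
    using a1 a2 gX by simp
  also have "\<dots> = rev (map ?h [0..<2 * Suc n])"
    using Suc.IH by simp
  finally show ?case .
qed

lemma refl_word_act_braid:
  assumes s: "s \<in> S" and t: "t \<in> S"
  shows "refl_word_act (concat (replicate (cox_m G s t) [s, t])) = id"
proof
  fix p :: "'a \<times> bool"
  obtain y b where p: "p = (y, b)" by force
  let ?m = "cox_m G s t"
  let ?h = "\<lambda>i. t \<otimes> (s \<otimes> t) [^] i"
  let ?X = "concat (replicate ?m [s, t])"
  have cs: "s \<in> carrier G" "t \<in> carrier G" using s t gen_closed by auto
  have pm: "(s \<otimes> t) [^] ?m = \<one>" unfolding cox_m_def using cs by simp
  then have gX: "word_eval G ?X = \<one>" using word_eval_braid_word[OF cs] by simp
  text \<open>The right reflections of \<open>(st)\<^sup>m\<close> list the \<open>m\<close> reflections \<open>t(st)\<^sup>i\<close> twice each.\<close>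
  have periodic: "map ?h [?m..<?m + ?m] = map ?h [0..<?m]"
  proof -
    have shift: "?h (i + ?m) = ?h i" for i
      using pm cs nat_pow_mult[of "s \<otimes> t" i ?m] by simp
    have "map ?h [?m..<?m + ?m] = map (\<lambda>i. ?h (i + ?m)) [0..<?m]"
      by (simp add: map_add_upt[symmetric] del: map_add_upt)
    also have "\<dots> = map ?h [0..<?m]"
      using shift by simp
    finally show ?thesis .
  qed
  have "[0..<2 * ?m] = [0..<?m] @ [?m..<?m + ?m]"
    by (simp only: mult_2 upt_add_eq_append[of 0 ?m ?m, simplified])
  then have "count_list (right_reflections ?X) y = 2 * count_list (map ?h [0..<?m]) y"
    using periodic by (simp only: right_reflections_braid_word[OF s t] count_list_rev map_append
        count_list_append mult_2)
  then have even: "even (count_list (right_reflections ?X) y)" by simp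
  have X: "set ?X \<subseteq> S" using s t by auto
  show "refl_word_act ?X p = id p"
  proof (cases "y \<in> carrier G")
    case True
    then show ?thesis using refl_word_act_eq[OF X True, of b] gX even p by simp
  next
    case False
    then show ?thesis using refl_word_act_outside p by simp
  qed
qed

lemma refl_word_act_cox_eq:
  "cox_eq G S u v \<Longrightarrow>
   (set u \<subseteq> S \<longleftrightarrow> set v \<subseteq> S) \<and> (set u \<subseteq> S \<longrightarrow> refl_word_act u = refl_word_act v)"
proof (induction rule: cox_eq.induct)
  case (ctx u v a b)
  then show ?case by (auto simp: refl_word_act_append)
next
  case (sq s)
  then show ?case by (auto simp: refl_act_involution)
next
  case (braid s t)
  then show ?case using refl_word_act_braid[of s t] by auto
qed auto

text \<open>The only place where the presentation of \<open>W\<close> is used.\<close>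
lemma refl_word_act_well_defined:
  assumes u: "set u \<subseteq> S" and v: "set v \<subseteq> S" and e: "word_eval G u = word_eval G v"
  shows "refl_word_act u = refl_word_act v"
proof
  fix p
  have "word_eval G (rev v @ u) = word_eval G (rev v) \<otimes> word_eval G v"
    using e u v gens_word_closed by (simp add: word_eval_append)
  also have "\<dots> = \<one>" using word_eval_rev_mult[OF v] .
  finally have "cox_eq G S (rev v @ u) []" using relations_complete u v by auto
  then have "refl_word_act (rev v @ u) = refl_word_act []"
    using refl_word_act_cox_eq u v by auto
  then have "refl_word_act (rev v) (refl_word_act u p) = p"
    by (metis comp_apply id_apply refl_word_act_Nil refl_word_act_append)
  then show "refl_word_act u p = refl_word_act v p" using refl_word_act_rev[OF v, of "refl_word_act u p"] by simp
qed

definition inversion_parity :: "'a list \<Rightarrow> 'a \<Rightarrow> bool" where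
  "inversion_parity u y \<longleftrightarrow> odd (count_list (right_reflections u) y)"

lemma inversion_parity_well_defined:
  "set u \<subseteq> S \<Longrightarrow> set v \<subseteq> S \<Longrightarrow> word_eval G u = word_eval G v \<Longrightarrow> y \<in> carrier G \<Longrightarrow>
   inversion_parity u y \<longleftrightarrow> inversion_parity v y"
  using refl_word_act_well_defined[of u v] refl_word_act_eq[of u y False] refl_word_act_eq[of v y False]
  unfolding inversion_parity_def by auto

lemma right_reflection_deletion:
  "set u \<subseteq> S \<Longrightarrow> y \<in> set (right_reflections u) \<Longrightarrow>
   \<exists>u'. set u' \<subseteq> S \<and> word_eval G u' = word_eval G u \<otimes> y \<and> length u' < length u"
proof (induction u)
  case Nil
  then show ?case by simp
next
  case (Cons s u)
  let ?g = "word_eval G u"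
  have c: "?g \<in> carrier G" "s \<in> carrier G" "set u \<subseteq> S" "s \<in> S"
    using Cons.prems gens_word_closed gen_closed by auto
  from Cons.prems(2) consider "y = inv ?g \<otimes> s \<otimes> ?g" | "y \<in> set (right_reflections u)"
    by auto
  then show ?case
  proof cases
    case 1
    have "word_eval G (s # u) \<otimes> y = s \<otimes> (?g \<otimes> inv ?g) \<otimes> (s \<otimes> ?g)"
      using 1 c by (simp only: word_eval_Cons m_assoc m_closed inv_closed)
    also have "\<dots> = ?g"
      using c gen_square[OF c(4)] by (simp add: m_assoc[symmetric])
    finally show ?thesis using c by (intro exI[of _ u]) auto
  next
    case 2
    then obtain u' where u': "set u' \<subseteq> S" "word_eval G u' = ?g \<otimes> y" "length u' < length u"
      using Cons c by blast
    have "y \<in> carrier G" using right_reflections_closed[OF c(3)] 2 by auto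
    then show ?thesis using u' c by (intro exI[of _ "s # u'"]) (auto simp: m_assoc)
  qed
qed

lemma len_mult_less_if_inversion_parity:
  assumes "set u \<subseteq> S" "inversion_parity u y"
  shows "len (word_eval G u \<otimes> y) < length u"
proof -
  have "y \<in> set (right_reflections u)"
    using assms(2) unfolding inversion_parity_def using count_notin by fastforce
  then obtain u' where "set u' \<subseteq> S" "word_eval G u' = word_eval G u \<otimes> y" "length u' < length u"
    using right_reflection_deletion assms(1) by blast
  then show ?thesis using len_le_length[of u'] by auto
qed

lemma right_reflections_snoc:
  "set u \<subseteq> S \<Longrightarrow> r \<in> S \<Longrightarrow>
   right_reflections (u @ [r]) = map (\<lambda>y. r \<otimes> y \<otimes> r) (right_reflections u) @ [r]"
proof (induction u)
  case Nil
  then show ?case using inv_gen[of r] gen_closed[of r] gen_square[of r] by simp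
next
  case (Cons s u)
  let ?g = "word_eval G u"
  have c: "?g \<in> carrier G" "s \<in> carrier G" "r \<in> carrier G" "set u \<subseteq> S"
    using Cons.prems gens_word_closed gen_closed by auto
  have "word_eval G (u @ [r]) = ?g \<otimes> r"
    using c gens_word_closed[OF c(4)] word_eval_append[of u "[r]"] by simp
  moreover have "inv (?g \<otimes> r) \<otimes> s \<otimes> (?g \<otimes> r) = r \<otimes> (inv ?g \<otimes> s \<otimes> ?g) \<otimes> r"
    using c inv_gen[OF Cons.prems(2)] by (simp add: inv_mult_group m_assoc)
  ultimately show ?case using Cons by simp
qed

lemma inversion_parity_snoc:
  assumes u: "set u \<subseteq> S" and r: "r \<in> S"
  shows "inversion_parity (u @ [r]) r \<longleftrightarrow> \<not> inversion_parity u r"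
proof -
  have c: "r \<in> carrier G" using gen_closed[OF r] .
  have "inj_on (\<lambda>y. r \<otimes> y \<otimes> r) (carrier G)"
  proof (rule inj_onI)
    fix x y assume "x \<in> carrier G" "y \<in> carrier G" "r \<otimes> x \<otimes> r = r \<otimes> y \<otimes> r"
    then show "x = y" using c by simp
  qed
  then have "inj_on (\<lambda>y. r \<otimes> y \<otimes> r) (insert r (set (right_reflections u)))"
    by (rule inj_on_subset) (use c right_reflections_closed[OF u] in auto)
  then have "count_list (map (\<lambda>y. r \<otimes> y \<otimes> r) (right_reflections u)) (r \<otimes> r \<otimes> r)
      = count_list (right_reflections u) r"
    by (rule count_list_map_inj_on)
  moreover have "r \<otimes> r \<otimes> r = r" using gen_square[OF r] c by simp
  ultimately show ?thesis
    unfolding inversion_parity_def right_reflections_snoc[OF u r] by simp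
qed

lemma len_less_mult_if_not_inversion_parity:
  assumes u: "set u \<subseteq> S" and r: "r \<in> S" and nq: "\<not> inversion_parity u r"
  shows "len (word_eval G u) < len (word_eval G u \<otimes> r)"
proof -
  let ?g = "word_eval G u"
  have c: "?g \<in> carrier G" "r \<in> carrier G" using u r gens_word_closed gen_closed by auto
  obtain u' where u': "set u' \<subseteq> S" "word_eval G u' = ?g \<otimes> r" "length u' = len (?g \<otimes> r)"
    using exists_reduced_word[of "?g \<otimes> r"] c by auto
  have "word_eval G (u' @ [r]) = ?g"
    using u' c gen_square[OF r] gens_word_closed[OF u'(1)] by (simp add: word_eval_append m_assoc)
  then have "inversion_parity (u' @ [r]) r \<longleftrightarrow> inversion_parity u r"
    using inversion_parity_well_defined[of "u' @ [r]" u r] u u' r c by simp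
  then have "inversion_parity u' r"
    using inversion_parity_snoc[OF u'(1) r] nq by simp
  from len_mult_less_if_inversion_parity[OF u'(1) this]
  have "len (?g \<otimes> r \<otimes> r) < len (?g \<otimes> r)" using u' by simp
  then show ?thesis using c gen_square[OF r] by (simp add: m_assoc)
qed

lemma deodhar_lemma:
  assumes x: "x \<in> carrier G" and s: "s \<in> S" and r: "r \<in> S"
    and up: "len x < len (x \<otimes> r)" and not_up: "\<not> len (s \<otimes> x) < len (s \<otimes> x \<otimes> r)"
  shows "inv x \<otimes> s \<otimes> x = r"
proof -
  obtain v where v: "set v \<subseteq> S" "word_eval G v = x" "length v = len x"
    using exists_reduced_word[OF x] .
  have sv: "set (s # v) \<subseteq> S" using v s by auto
  have "inversion_parity (s # v) r"
    using len_less_mult_if_not_inversion_parity[OF sv r] not_up v by auto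
  moreover have "\<not> inversion_parity v r"
  proof
    assume "inversion_parity v r"
    from len_mult_less_if_inversion_parity[OF v(1) this] v up show False by simp
  qed
  ultimately show ?thesis unfolding inversion_parity_def using v by (auto split: if_splits)
qed

definition reduced_word :: "'a list \<Rightarrow> bool" where
  "reduced_word u \<longleftrightarrow> set u \<subseteq> S \<and> length u = len (word_eval G u)"

lemma reduced_word_exists:
  "x \<in> carrier G \<Longrightarrow> \<exists>u. reduced_word u \<and> word_eval G u = x"
  unfolding reduced_word_def by (metis exists_reduced_word)

lemma KJ_word_act_Nil [simp]: "KJ_word_act G S J [] \<tau> = \<tau>"
  by (simp add: KJ_word_act_def)

lemma KJ_word_act_Cons [simp]: "KJ_word_act G S J (s # u) \<tau> = KJ_act G S J s (KJ_word_act G S J u \<tau>)"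
  by (simp add: KJ_word_act_def)

lemma KJ_word_act_append: "KJ_word_act G S J (u @ v) \<tau> = KJ_word_act G S J u (KJ_word_act G S J v \<tau>)"
  by (simp add: KJ_word_act_def)

lemma KJ_act_min_reps: "s \<otimes> x \<in> min_reps G S J \<Longrightarrow> KJ_act G S J s (x, z) = (s \<otimes> x, z)"
  by (simp add: KJ_act_def)

context
  fixes J
  assumes J_gens: "J \<subseteq> S"
begin

abbreviation WJ :: "('a, 'b) monoid_scheme" where
  "WJ \<equiv> parabolic G J"

lemma J_carrier: "J \<subseteq> carrier G"
  using J_gens gens_carrier by auto

lemma group_WJ: "group WJ"
  using group_parabolic[OF J_carrier] .

lemma J_generate: "t \<in> J \<Longrightarrow> t \<in> generate G J"
  by (rule generate.incl)

lemma KJ_act_not_min_reps: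
  assumes "s \<otimes> x \<notin> min_reps G S J" "inv x \<otimes> s \<otimes> x = t" "t \<in> J" "z \<in> plus_carrier WJ J"
  shows "KJ_act G S J s (x, z) = (x, conj_act WJ t z)"
proof -
  have "J \<subseteq> carrier WJ" "\<And>t. t \<in> J \<Longrightarrow> t \<otimes>\<^bsub>WJ\<^esub> t = \<one>\<^bsub>WJ\<^esub>"
    using J_gens gen_square by (auto intro: J_generate)
  from group.plus_mult_conj_gen[OF group_WJ this assms(3,4)]
  have "plus_mult WJ (plus_mult WJ (plus_emb WJ t) z) (plus_emb WJ t) = conj_act WJ t z" .
  then show ?thesis
    using assms(1,2) by (simp add: KJ_act_def Let_def)
qed

lemma KJ_act_stays:
  assumes x: "x \<in> min_reps G S J" and s: "s \<in> S" and sx: "s \<otimes> x \<notin> min_reps G S J"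
    and z: "z \<in> plus_carrier WJ J"
  shows "\<exists>r\<in>J. KJ_act G S J s (x, z) = (x, conj_act WJ r z)"
proof -
  have xc: "x \<in> carrier G" using x unfolding min_reps_def by auto
  then obtain r where r: "r \<in> J" "\<not> len (s \<otimes> x) < len (s \<otimes> x \<otimes> r)"
    using sx gen_closed[OF s] unfolding min_reps_def by auto
  have "len x < len (x \<otimes> r)" using x r(1) unfolding min_reps_def by auto
  then have "inv x \<otimes> s \<otimes> x = r" using deodhar_lemma[OF xc s _ _ r(2)] r(1) J_gens by auto
  then show ?thesis using KJ_act_not_min_reps[OF sx _ r(1) z] r(1) by blast
qed

lemma KJ_word_act_conj:
  assumes "set u \<subseteq> S" "x \<in> min_reps G S J" "z \<in> plus_carrier WJ J"
  shows "fst (KJ_word_act G S J u (x, z)) \<in> min_reps G S J \<and>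
    (\<exists>v\<in>generate G J. snd (KJ_word_act G S J u (x, z)) = conj_act WJ v z)"
  using assms(1)
proof (induction u)
  case Nil
  have "conj_act WJ \<one> z = z" using group.conj_act_one[OF group_WJ assms(3)] by simp
  then show ?case using assms(2) by (intro conjI bexI[of _ \<one>]) (simp_all add: generate.one)
next
  case (Cons s u)
  have s: "s \<in> S" and u: "set u \<subseteq> S" using Cons.prems by auto
  obtain x' v where x': "KJ_word_act G S J u (x, z) = (x', conj_act WJ v z)"
    "x' \<in> min_reps G S J" "v \<in> generate G J"
    using Cons.IH[OF u] by (metis prod.collapse)
  have vz: "conj_act WJ v z \<in> plus_carrier WJ J"
    using group.conj_act_closed[OF group_WJ] x'(3) assms(3) by simp
  show ?case
  proof (cases "s \<otimes> x' \<in> min_reps G S J")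
    case True
    then show ?thesis using x' by (auto simp: KJ_act_min_reps)
  next
    case False
    then obtain r where r: "r \<in> J" "KJ_act G S J s (x', conj_act WJ v z) = (x', conj_act WJ r (conj_act WJ v z))"
      using KJ_act_stays[OF x'(2) s False vz] by blast
    moreover have "conj_act WJ r (conj_act WJ v z) = conj_act WJ (r \<otimes> v) z"
      using group.conj_act_mult[OF group_WJ] J_generate[OF r(1)] x'(3) assms(3) by simp
    moreover have "r \<otimes> v \<in> generate G J"
      using generate.eng[OF J_generate[OF r(1)] x'(3)] .
    ultimately show ?thesis using x'(1,2) by (intro conjI bexI[of _ "r \<otimes> v"]) simp_all
  qed
qed

lemma reduced_min_reps_tail:
  assumes red: "reduced_word (s # u)" and m: "word_eval G (s # u) \<in> min_reps G S J"
  shows "reduced_word u \<and> word_eval G u \<in> min_reps G S J"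
proof -
  let ?g = "word_eval G u"
  have s: "s \<in> S" and u: "set u \<subseteq> S" using red unfolding reduced_word_def by auto
  have gc: "?g \<in> carrier G" using u gens_word_closed by simp
  have sc: "s \<in> carrier G" using s gen_closed by simp
  have L: "length u = len ?g"
    using red len_le_length[OF u] len_gen_mult_le[OF s gc] unfolding reduced_word_def by simp
  have "len ?g < len (?g \<otimes> r)" if r: "r \<in> J" for r
  proof (rule ccontr)
    assume "\<not> len ?g < len (?g \<otimes> r)"
    moreover have rc: "r \<in> carrier G" using r J_carrier by auto
    then have "len (s \<otimes> (?g \<otimes> r)) \<le> Suc (len (?g \<otimes> r))" using len_gen_mult_le[OF s] gc by simp
    moreover have "len (s \<otimes> ?g) < len (s \<otimes> ?g \<otimes> r)" using m r unfolding min_reps_def by simp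
    ultimately show False using red L gc rc sc unfolding reduced_word_def by (simp add: m_assoc)
  qed
  then show ?thesis using L u gc unfolding min_reps_def reduced_word_def by simp
qed

lemma KJ_word_act_reduced:
  "reduced_word u \<Longrightarrow> word_eval G u \<in> min_reps G S J \<Longrightarrow>
   KJ_word_act G S J u (\<one>, z) = (word_eval G u, z)"
proof (induction u)
  case Nil
  then show ?case by simp
next
  case (Cons s u)
  then show ?case using reduced_min_reps_tail[OF Cons.prems] by (simp add: KJ_act_min_reps)
qed

lemma KJ_word_act_rev_reduced:
  "reduced_word u \<Longrightarrow> word_eval G u \<in> min_reps G S J \<Longrightarrow>
   KJ_word_act G S J (rev u) (word_eval G u, z) = (\<one>, z)"
proof (induction u)
  case Nil
  then show ?case by simp
next
  case (Cons s u)
  note tail = reduced_min_reps_tail[OF Cons.prems]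
  have s: "s \<in> S" and u: "set u \<subseteq> S" using Cons.prems unfolding reduced_word_def by auto
  have "s \<otimes> word_eval G (s # u) = word_eval G u"
    using gen_square[OF s] gen_closed[OF s] gens_word_closed[OF u] by (simp add: m_assoc[symmetric])
  then show ?case using Cons.IH tail by (simp add: KJ_word_act_append KJ_act_min_reps)
qed

lemma KJ_word_act_parabolic:
  assumes "set c \<subseteq> J" "z \<in> plus_carrier WJ J"
  shows "KJ_word_act G S J c (\<one>, z) = (\<one>, conj_act WJ (word_eval G c) z)"
  using assms(1)
proof (induction c)
  case Nil
  then show ?case using group.conj_act_one[OF group_WJ] assms(2) by simp
next
  case (Cons s c)
  have s: "s \<in> J" and c: "set c \<subseteq> J" using Cons.prems by auto
  have sc: "s \<in> carrier G" using s J_carrier by auto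
  have gc: "word_eval G c \<in> generate G J" using word_eval_in_generate[OF c] .
  have "s \<otimes> s = \<one>" using s J_gens gen_square by auto
  then have "\<not> len s < len (s \<otimes> s)" using len_one by simp
  then have "s \<notin> min_reps G S J" using s unfolding min_reps_def by auto
  then have "KJ_act G S J s (\<one>, conj_act WJ (word_eval G c) z)
      = (\<one>, conj_act WJ s (conj_act WJ (word_eval G c) z))"
    using KJ_act_not_min_reps[OF _ _ s] sc group.conj_act_closed[OF group_WJ] gc assms(2) by simp
  also have "\<dots> = (\<one>, conj_act WJ (word_eval G (s # c)) z)"
    using group.conj_act_mult[OF group_WJ] J_generate[OF s] gc assms(2) by simp
  finally show ?case using Cons.IH[OF c] by simp
qed

lemma same_W_orbit_iff_conj:
  assumes "x \<in> min_reps G S J" "z \<in> plus_carrier WJ J" "x' \<in> min_reps G S J"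
  shows "same_W_orbit G S J (x, z) (x', z') \<longleftrightarrow> (\<exists>v\<in>generate G J. z' = conj_act WJ v z)"
proof
  assume "same_W_orbit G S J (x, z) (x', z')"
  then show "\<exists>v\<in>generate G J. z' = conj_act WJ v z"
    using KJ_word_act_conj[OF _ assms(1,2)] unfolding same_W_orbit_def by force
next
  assume "\<exists>v\<in>generate G J. z' = conj_act WJ v z"
  then obtain c where c: "set c \<subseteq> J" "z' = conj_act WJ (word_eval G c) z"
    using generate_involutions_word[OF J_carrier] J_gens gen_square by blast
  obtain u u' where u: "reduced_word u" "word_eval G u = x" and u': "reduced_word u'" "word_eval G u' = x'"
    using reduced_word_exists assms(1,3) unfolding min_reps_def by blast
  text \<open>Walk from \<open>x\<close> down to \<open>1\<close>, conjugate inside \<open>W\<^sub>J\<close>, walk up to \<open>x'\<close>.\<close>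
  have "KJ_word_act G S J (u' @ c @ rev u) (x, z) = (x', z')"
    using KJ_word_act_rev_reduced[OF u(1)] KJ_word_act_parabolic[OF c(1) assms(2)]
      KJ_word_act_reduced[OF u'(1)] u u' c(2) assms(1,3) by (simp add: KJ_word_act_append)
  moreover have "set (u' @ c @ rev u) \<subseteq> S"
    using u u' c J_gens unfolding reduced_word_def by auto
  ultimately show "same_W_orbit G S J (x, z) (x', z')"
    unfolding same_W_orbit_def by blast
qed

end

end

theorem mainTheorem10:
  fixes W :: "('w, 'b) monoid_scheme" and S J :: "'w set"
    and w w' :: 'w and z z' :: "'w \<times> ('w \<Rightarrow> 'w)"
  assumes "coxeter_system W S" and "finite (carrier W)" and "J \<subseteq> S"
    and "(w, z) \<in> KJ W S J" and "(w', z') \<in> KJ W S J"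
  shows "same_W_orbit W S J (w, z) (w', z') \<longleftrightarrow>
         (\<exists>v \<in> carrier (parabolic W J). z' = conj_act (parabolic W J) v z)"
proof -
  interpret coxeter_presentation W S
    using assms(1) by (rule coxeter_presentationI)
  have "w \<in> min_reps W S J" "z \<in> plus_carrier (parabolic W J) J" "w' \<in> min_reps W S J"
    using assms(4,5) unfolding KJ_def perfect_involutions_def by auto
  then show ?thesis
    using same_W_orbit_iff_conj[OF assms(3)] by simp
qed

end
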